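(* Let $\lambda\in(0,1)$ and let $G$ be a finite simple connected graph with $n\ge 2$ vertices. Then $$Mt^{e}_{\lambda}(G)\;\le\;\max_{1\le D\le n-1}\left[\frac{\lambda\left[1-(D+1)\lambda^{D}+D\lambda^{D+1}\right]}{(\lambda-1)^2}+(n-D-1)D\lambda^{D}\right].$$ Moreover, equality holds for a broom on $n$ vertices, the maximum of $t^e_\lambda$ over its vertices being attained at its starting vertex.
   Context: $d(u,v)$ denotes graph distance. For a vertex $u$ of $G=(V,E)$, $t^{e}_{\lambda}(u)=\sum_{v\in V\setminus\{u\}} d(u,v)\lambda^{d(u,v)}$, and $Mt^{e}_{\lambda}(G)=\max\{t^{e}_{\lambda}(u):u\in V\}$. A broom on $n$ vertices (with parameter $D$, $1\le D\le n-1$) is the graph consisting of a path $u=v_0v_1\cdots v_D$ together with $n-D-1$ further vertices, each adjacent only to $v_{D-1}$; the vertex $u=v_0$ is called its starting vertex. *)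

theory Defs
  imports Complex_Main
begin

definition simple_graph :: "'a set \<Rightarrow> ('a \<Rightarrow> 'a \<Rightarrow> bool) \<Rightarrow> bool" where
  "simple_graph V E \<longleftrightarrow> finite V \<and> (\<forall>u v. E u v \<longrightarrow> E v u)
     \<and> (\<forall>u. \<not> E u u) \<and> (\<forall>u v. E u v \<longrightarrow> u \<in> V \<and> v \<in> V)"

definition is_walk :: "('a \<Rightarrow> 'a \<Rightarrow> bool) \<Rightarrow> 'a \<Rightarrow> 'a \<Rightarrow> nat \<Rightarrow> bool" where
  "is_walk E u v k \<longleftrightarrow> (\<exists>xs. length xs = Suc k \<and> xs ! 0 = u \<and> xs ! k = v
      \<and> (\<forall>i<k. E (xs ! i) (xs ! Suc i)))"

definition connected_graph :: "'a set \<Rightarrow> ('a \<Rightarrow> 'a \<Rightarrow> bool) \<Rightarrow> bool" where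
  "connected_graph V E \<longleftrightarrow> (\<forall>u\<in>V. \<forall>v\<in>V. \<exists>k. is_walk E u v k)"

definition gdist :: "('a \<Rightarrow> 'a \<Rightarrow> bool) \<Rightarrow> 'a \<Rightarrow> 'a \<Rightarrow> nat" where
  "gdist E u v = (LEAST k. is_walk E u v k)"

definition te :: "real \<Rightarrow> 'a set \<Rightarrow> ('a \<Rightarrow> 'a \<Rightarrow> bool) \<Rightarrow> 'a \<Rightarrow> real" where
  "te lam V E u = (\<Sum>v\<in>V - {u}. real (gdist E u v) * lam ^ gdist E u v)"

definition Mte :: "real \<Rightarrow> 'a set \<Rightarrow> ('a \<Rightarrow> 'a \<Rightarrow> bool) \<Rightarrow> real" where
  "Mte lam V E = Max (te lam V E ` V)"

definition broom_bound :: "real \<Rightarrow> nat \<Rightarrow> nat \<Rightarrow> real" where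
  "broom_bound lam n D =
     lam * (1 - real (D + 1) * lam ^ D + real D * lam ^ (D + 1)) / (lam - 1)\<^sup>2
     + real (n - D - 1) * real D * lam ^ D"

text \<open>The broom on vertices {0..<n}: path 0 - 1 - ... - D, and vertices D+1,...,n-1
  each adjacent only to D-1. Starting vertex is 0.\<close>
definition broom_adj :: "nat \<Rightarrow> nat \<Rightarrow> nat \<Rightarrow> nat \<Rightarrow> bool" where
  "broom_adj n D i j \<longleftrightarrow> i < n \<and> j < n \<and>
     ((i \<le> D \<and> j \<le> D \<and> (Suc i = j \<or> Suc j = i))
      \<or> (D < i \<and> j = D - 1) \<or> (D < j \<and> i = D - 1))"

end

theory Submission imports Defs begin

text \<open>Let \<open>u\<close> have eccentricity \<open>e\<close> and let \<open>j \<in> {1..e}\<close> maximise \<open>f k = k \<lambda>\<^sup>k\<close> on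
  \<open>{1..e}\<close>. A shortest path from \<open>u\<close> to a farthest vertex contains a vertex at each
  distance \<open>1, \<dots>, j\<close>; they contribute \<open>f 1 + \<dots> + f j\<close>, and each of the remaining
  \<open>n - 1 - j\<close> vertices contributes at most \<open>f j\<close>. This is the value of \<open>t\<^sup>e\<^sub>\<lambda>\<close> at the starting
  vertex of the broom with parameter \<open>j\<close>.\<close>

lemma is_walk_iff:
  "is_walk E u v k \<longleftrightarrow> (\<exists>p. p 0 = u \<and> p k = v \<and> (\<forall>i<k. E (p i) (p (Suc i))))"
proof
  assume "is_walk E u v k"
  then obtain xs where "xs ! 0 = u" "xs ! k = v" "\<forall>i<k. E (xs ! i) (xs ! Suc i)"
    unfolding is_walk_def by blast
  then show "\<exists>p. p 0 = u \<and> p k = v \<and> (\<forall>i<k. E (p i) (p (Suc i)))"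
    by (intro exI[of _ "(!) xs"]) auto
next
  assume "\<exists>p. p 0 = u \<and> p k = v \<and> (\<forall>i<k. E (p i) (p (Suc i)))"
  then obtain p where "p 0 = u" "p k = v" "\<forall>i<k. E (p i) (p (Suc i))" by blast
  then show "is_walk E u v k" unfolding is_walk_def
    by (intro exI[of _ "map p [0..<Suc k]"]) (auto simp: nth_map simp del: upt_Suc)
qed

lemma is_walk_append:
  assumes "is_walk E u v a" "is_walk E v w b"
  shows "is_walk E u w (a + b)"
proof -
  obtain p q where p: "p 0 = u" "p a = v" "\<forall>i<a. E (p i) (p (Suc i))"
    and q: "q 0 = v" "q b = w" "\<forall>i<b. E (q i) (q (Suc i))"
    using assms unfolding is_walk_iff by blast
  define r where "r i = (if i \<le> a then p i else q (i - a))" for i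
  have "E (r i) (r (Suc i))" if "i < a + b" for i
  proof (cases "i < a")
    case False
    then have "Suc i - a = Suc (i - a)" by auto
    then show ?thesis using False p q that by (auto simp: r_def)
  qed (use p in \<open>auto simp: r_def\<close>)
  moreover have "r 0 = u" "r (a + b) = w" using p q by (auto simp: r_def)
  ultimately show ?thesis unfolding is_walk_iff by blast
qed

lemma is_walk_rev:
  assumes "\<And>a b. E a b \<Longrightarrow> E b a" and "is_walk E u v k"
  shows "is_walk E v u k"
proof -
  obtain p where p: "p 0 = u" "p k = v" "\<forall>i<k. E (p i) (p (Suc i))"
    using assms(2) unfolding is_walk_iff by blast
  have "E (p (k - i)) (p (k - Suc i))" if "i < k" for i
  proof -
    have "E (p (k - Suc i)) (p (Suc (k - Suc i)))" using p(3) that by simp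
    moreover have "Suc (k - Suc i) = k - i" using that by simp
    ultimately show ?thesis using assms(1) by simp
  qed
  then show ?thesis unfolding is_walk_iff using p by (intro exI[of _ "\<lambda>i. p (k - i)"]) auto
qed

lemma gdist_le: "is_walk E u v k \<Longrightarrow> gdist E u v \<le> k"
  unfolding gdist_def by (rule Least_le)

lemma is_walk_gdist: "is_walk E u v k \<Longrightarrow> is_walk E u v (gdist E u v)"
  unfolding gdist_def by (rule LeastI)

lemma gdist_triangle:
  "is_walk E u v a \<Longrightarrow> is_walk E v w b \<Longrightarrow> gdist E u w \<le> gdist E u v + gdist E v w"
  by (rule gdist_le, rule is_walk_append, erule is_walk_gdist, erule is_walk_gdist)

lemma gdist_refl: "gdist E u u = 0"
proof -
  have "is_walk E u u 0" unfolding is_walk_iff by auto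
  then show ?thesis using gdist_le by fastforce
qed

lemma gdist_pos: "is_walk E u v k \<Longrightarrow> u \<noteq> v \<Longrightarrow> 0 < gdist E u v"
  using is_walk_gdist[of E u v k] unfolding is_walk_iff by (metis gr0I)

lemma gdist_along_shortest_walk:
  assumes "p 0 = u" "\<forall>i<d. E (p i) (p (Suc i))" "gdist E u (p d) = d" "i \<le> d"
  shows "gdist E u (p i) = i"
proof -
  have prefix: "is_walk E u (p i) i"
    unfolding is_walk_iff using assms by (intro exI[of _ p]) auto
  have suffix: "is_walk E (p i) (p d) (d - i)"
    unfolding is_walk_iff using assms by (intro exI[of _ "\<lambda>k. p (k + i)"]) auto
  have "d \<le> gdist E u (p i) + gdist E (p i) (p d)"
    using gdist_triangle[OF prefix suffix] assms(3) by simp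
  then show ?thesis using gdist_le[OF prefix] gdist_le[OF suffix] assms(4) by linarith
qed

lemma is_walk_potential_le:
  assumes "is_walk E u v k" "\<And>a b. E a b \<Longrightarrow> h b \<le> Suc (h a)"
  shows "h v \<le> h u + k"
proof -
  obtain p where p: "p 0 = u" "p k = v" "\<forall>i<k. E (p i) (p (Suc i))"
    using assms(1) unfolding is_walk_iff by blast
  have "h (p i) \<le> h u + i" if "i \<le> k" for i
    using that
  proof (induction i)
    case (Suc i)
    then have "h (p (Suc i)) \<le> Suc (h (p i))" using p(3) assms(2) by simp
    then show ?case using Suc by simp
  qed (simp add: p(1))
  then show ?thesis using p(2) by blast
qed

lemma sum_k_power_closed_form:
  fixes lam :: real
  assumes "lam \<noteq> 1"
  shows "(\<Sum>k=1..j. real k * lam ^ k)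
    = lam * (1 - real (j + 1) * lam ^ j + real j * lam ^ (j + 1)) / (lam - 1)\<^sup>2"
proof -
  have "(lam - 1)\<^sup>2 * (\<Sum>k=1..j. real k * lam ^ k)
      = lam * (1 - real (j + 1) * lam ^ j + real j * lam ^ (j + 1))"
    by (induction j) (simp_all add: algebra_simps power2_eq_square)
  then show ?thesis using assms by (simp add: field_simps)
qed

lemma broom_bound_eq_sum:
  "lam \<noteq> 1 \<Longrightarrow> broom_bound lam n D
    = (\<Sum>k=1..D. real k * lam ^ k) + real (n - D - 1) * (real D * lam ^ D)"
  unfolding broom_bound_def by (subst sum_k_power_closed_form) simp_all

lemma sum_le_sum_over_section:
  fixes f :: "nat \<Rightarrow> real"
  assumes "finite S" "p ` {1..j} \<subseteq> S" "\<And>k. k \<in> {1..j} \<Longrightarrow> g (p k) = k"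
    and "\<And>v. v \<in> S \<Longrightarrow> f (g v) \<le> c"
  shows "(\<Sum>v\<in>S. f (g v)) \<le> (\<Sum>k=1..j. f k) + real (card S - j) * c"
proof -
  let ?W = "p ` {1..j}"
  have inj: "inj_on p {1..j}" using assms(3) by (rule inj_on_inverseI)
  have "(\<Sum>v\<in>?W. f (g v)) = (\<Sum>k=1..j. f (g (p k)))"
    unfolding sum.reindex[OF inj] o_def ..
  also have "\<dots> = (\<Sum>k=1..j. f k)"
    by (intro sum.cong) (simp_all add: assms(3))
  finally have "(\<Sum>v\<in>?W. f (g v)) = (\<Sum>k=1..j. f k)" .
  moreover have "(\<Sum>v\<in>S - ?W. f (g v)) \<le> real (card (S - ?W)) * c"
    using sum_bounded_above[of "S - ?W" "\<lambda>v. f (g v)" c] assms(4) by auto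
  moreover have "card (S - ?W) = card S - j"
    using assms(1,2) inj by (simp add: card_Diff_subset finite_subset card_image)
  ultimately show ?thesis
    using sum.subset_diff[OF assms(2,1), of "\<lambda>v. f (g v)"] by simp
qed

lemma geodesic_exists:
  assumes "simple_graph V E" "connected_graph V E" "u \<in> V" "v \<in> V"
  obtains p where "\<And>i. i \<le> gdist E u v \<Longrightarrow> p i \<in> V \<and> gdist E u (p i) = i"
proof -
  let ?d = "gdist E u v"
  obtain k where "is_walk E u v k" using assms(2-4) unfolding connected_graph_def by blast
  then obtain p where p: "p 0 = u" "p ?d = v" "\<forall>i<?d. E (p i) (p (Suc i))"
    using is_walk_gdist unfolding is_walk_iff by metis
  have "p i \<in> V" if "i \<le> ?d" for i
  proof (cases i)
    case (Suc i')
    then have "E (p i') (p i)" using p(3) that by simp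
    then show ?thesis using assms(1) unfolding simple_graph_def by blast
  qed (use p(1) assms(3) in simp)
  moreover have "gdist E u (p i) = i" if "i \<le> ?d" for i
    using gdist_along_shortest_walk[of p u ?d E i] p that by simp
  ultimately show ?thesis using that by blast
qed

lemma te_le_broom_sum:
  assumes "simple_graph V E" "connected_graph V E" "u \<in> V" "card V \<ge> 2"
  shows "\<exists>j\<in>{1..card V - 1}. te lam V E u
    \<le> (\<Sum>k=1..j. real k * lam ^ k) + real (card V - j - 1) * (real j * lam ^ j)"
proof -
  define f where "f k = real k * lam ^ k" for k
  define S where "S = V - {u}"
  have "finite V" using assms(1) unfolding simple_graph_def by blast
  then have finS: "finite S" and cardS: "card S = card V - 1"
    using assms(3) by (simp_all add: S_def)
  have dist_pos: "1 \<le> gdist E u v" if "v \<in> S" for v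
    using that assms(2,3) gdist_pos unfolding S_def connected_graph_def
    by (fastforce simp: Suc_le_eq)
  define e where "e = Max (gdist E u ` S)"
  have "S \<noteq> {}" using cardS assms(4) by auto
  then have "e \<in> gdist E u ` S" unfolding e_def using finS by (intro Max_in) auto
  then obtain v0 where v0: "v0 \<in> S" "gdist E u v0 = e" by blast
  have dist_le: "gdist E u v \<le> e" if "v \<in> S" for v
    using finS that unfolding e_def by simp
  obtain p where p: "\<And>i. i \<le> e \<Longrightarrow> p i \<in> V \<and> gdist E u (p i) = i"
    using geodesic_exists[OF assms(1-3), of v0] v0 unfolding S_def by blast
  have "1 \<le> e" using dist_pos v0 by fastforce
  then have "Max (f ` {1..e}) \<in> f ` {1..e}" by (intro Max_in) auto
  then obtain j where j: "j \<in> {1..e}" "f j = Max (f ` {1..e})" by auto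
  have f_le: "f (gdist E u v) \<le> f j" if "v \<in> S" for v
    using j dist_pos[OF that] dist_le[OF that] by simp
  have path_in_S: "p ` {1..j} \<subseteq> S"
    using p j gdist_refl[of E u] unfolding S_def by fastforce
  have "j \<le> card S"
    using card_mono[OF finS path_in_S] card_image[OF inj_on_inverseI[of "{1..j}" "gdist E u" p]]
      p j by simp
  moreover have "te lam V E u \<le> (\<Sum>k=1..j. f k) + real (card S - j) * f j"
    unfolding te_def S_def[symmetric] f_def[symmetric]
    by (rule sum_le_sum_over_section[OF finS path_in_S]) (use p j f_le in auto)
  ultimately show ?thesis using j cardS unfolding f_def by (intro bexI[of _ j]) auto
qed

lemma Mte_le_Max_broom_bound:
  assumes "lam \<noteq> 1" "simple_graph V E" "connected_graph V E" "card V \<ge> 2"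
  shows "Mte lam V E \<le> Max (broom_bound lam (card V) ` {1..card V - 1})"
  unfolding Mte_def
proof (rule Max.boundedI)
  show "finite (te lam V E ` V)" "te lam V E ` V \<noteq> {}"
    using assms(2,4) unfolding simple_graph_def by auto
next
  fix t assume "t \<in> te lam V E ` V"
  then obtain u where "u \<in> V" "t = te lam V E u" by blast
  then obtain j where "j \<in> {1..card V - 1}" "t \<le> broom_bound lam (card V) j"
    using te_le_broom_sum[OF assms(2,3) _ assms(4)] broom_bound_eq_sum[OF assms(1)] by metis
  then show "t \<le> Max (broom_bound lam (card V) ` {1..card V - 1})"
    by (meson Max_ge finite_atLeastAtMost finite_imageI image_eqI order_trans)
qed

lemma simple_graph_broom: "simple_graph {0..<n} (broom_adj n D)"
  unfolding simple_graph_def broom_adj_def by auto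

lemma is_walk_broom_start:
  assumes "1 \<le> D" "D < n" "v < n"
  shows "is_walk (broom_adj n D) 0 v (min v D)"
proof (cases "v \<le> D")
  case True
  then show ?thesis unfolding is_walk_iff broom_adj_def using assms
    by (intro exI[of _ "\<lambda>i. i"]) auto
next
  case False
  then show ?thesis unfolding is_walk_iff broom_adj_def using assms
    by (intro exI[of _ "\<lambda>i. if i < D then i else v"]) auto
qed

lemma gdist_broom_start:
  assumes "1 \<le> D" "D < n" "v < n"
  shows "gdist (broom_adj n D) 0 v = min v D"
proof -
  have "\<And>a b. broom_adj n D a b \<Longrightarrow> min b D \<le> Suc (min a D)"
    unfolding broom_adj_def using assms(1) by auto
  then have "min v D \<le> gdist (broom_adj n D) 0 v"
    using is_walk_potential_le[where h = "\<lambda>x. min x D",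
        OF is_walk_gdist[OF is_walk_broom_start[OF assms]]] by simp
  then show ?thesis using gdist_le[OF is_walk_broom_start[OF assms]] by simp
qed

lemma connected_graph_broom:
  assumes "1 \<le> D" "D < n"
  shows "connected_graph {0..<n} (broom_adj n D)"
  unfolding connected_graph_def
proof (intro ballI)
  fix a b assume "a \<in> {0..<n}" "b \<in> {0..<n}"
  have sym: "\<And>a b. broom_adj n D a b \<Longrightarrow> broom_adj n D b a"
    unfolding broom_adj_def by auto
  have "is_walk (broom_adj n D) a 0 (min a D)"
    using is_walk_rev[of "broom_adj n D", OF sym is_walk_broom_start[OF assms]] \<open>a \<in> {0..<n}\<close>
    by simp
  moreover have "is_walk (broom_adj n D) 0 b (min b D)"
    using is_walk_broom_start[OF assms] \<open>b \<in> {0..<n}\<close> by simp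
  ultimately show "\<exists>k. is_walk (broom_adj n D) a b k" by (blast intro: is_walk_append)
qed

lemma te_broom_start:
  assumes "1 \<le> D" "D < n" "lam \<noteq> 1"
  shows "te lam {0..<n} (broom_adj n D) 0 = broom_bound lam n D"
proof -
  let ?f = "\<lambda>k. real k * lam ^ k"
  have "te lam {0..<n} (broom_adj n D) 0 = (\<Sum>v\<in>{1..D} \<union> {D+1..<n}. ?f (min v D))"
    unfolding te_def using gdist_broom_start[OF assms(1,2)] assms
    by (intro sum.cong) auto
  also have "\<dots> = (\<Sum>v\<in>{1..D}. ?f (min v D)) + (\<Sum>v\<in>{D+1..<n}. ?f (min v D))"
    by (rule sum.union_disjoint) auto
  also have "\<dots> = (\<Sum>k=1..D. ?f k) + real (n - D - 1) * ?f D"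
    by (simp add: min_def)
  finally show ?thesis using broom_bound_eq_sum[OF assms(3)] by simp
qed

theorem theorem5:
  fixes lam :: real and V :: "'a set" and E :: "'a \<Rightarrow> 'a \<Rightarrow> bool"
  assumes "0 < lam" "lam < 1"
    and "simple_graph V E" "connected_graph V E" "card V \<ge> 2"
  shows "Mte lam V E \<le> Max (broom_bound lam (card V) ` {1..card V - 1})
    \<and> (\<exists>D. 1 \<le> D \<and> D \<le> card V - 1
         \<and> Mte lam {0..<card V} (broom_adj (card V) D)
             = Max (broom_bound lam (card V) ` {1..card V - 1})
         \<and> te lam {0..<card V} (broom_adj (card V) D) 0
             = Mte lam {0..<card V} (broom_adj (card V) D))"
proof -
  define n where "n = card V"
  let ?M = "Max (broom_bound lam n ` {1..n - 1})"
  have lam: "lam \<noteq> 1" using assms(2) by simp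
  have "?M \<in> broom_bound lam n ` {1..n - 1}"
    using assms(5) unfolding n_def by (intro Max_in) auto
  then obtain D where D: "1 \<le> D" "D \<le> n - 1" "broom_bound lam n D = ?M" by auto
  have "D < n" using D(2) assms(5) unfolding n_def by linarith
  have te_start: "te lam {0..<n} (broom_adj n D) 0 = ?M"
    using te_broom_start[OF D(1) \<open>D < n\<close> lam] D(3) by simp
  have "Mte lam {0..<n} (broom_adj n D) \<le> ?M"
    using Mte_le_Max_broom_bound[OF lam simple_graph_broom connected_graph_broom[OF D(1) \<open>D < n\<close>]]
      assms(5) unfolding n_def by simp
  moreover have "te lam {0..<n} (broom_adj n D) 0 \<le> Mte lam {0..<n} (broom_adj n D)"
    unfolding Mte_def using \<open>D < n\<close> by (intro Max_ge) auto
  ultimately have "Mte lam {0..<n} (broom_adj n D) = ?M" using te_start by linarith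
  then show ?thesis
    using te_start Mte_le_Max_broom_bound[OF lam assms(3-5)] D(1,2) unfolding n_def by auto
qed

end
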